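(* Let $T:X\rightrightarrows X^*$ be a multivalued operator such that $T+\alpha^*$ is pre-maximal pseudomonotone for every $\alpha^*\in X^*$. Then $T$ is pre-maximal monotone and $T^\mu$ is pre-maximal pseudomonotone.
   Context: $X$ is a real Banach space with dual $X^*$ and pairing $\langle x,x^*\rangle=x^*(x)$. A multivalued operator $T:X\rightrightarrows X^*$ is identified with its graph $T\subset X\times X^*$; $T+\alpha^*$ denotes the operator $x\mapsto T(x)+\alpha^*=\{x^*+\alpha^*:x^*\in T(x)\}$. The monotone polar is $T^\mu=\{(x,x^* ): \langle x-y,x^*-y^*\rangle\ge0\ \forall (y,y^* )\in T\}$; $T$ is monotone if $\langle x-y,x^*-y^*\rangle\ge0$ for all $(x,x^* ),(y,y^* )\in T$; $T$ is pre-maximal monotone if both $T$ and $T^\mu$ are monotone. For $(x,x^* ),(y,y^* )\in X\times X^*$, write $(x,x^* )\sim_p(y,y^* )$ if either $\min\{\langle x-y,y^*\rangle,\langle y-x,x^*\rangle\}<0$ or $\langle x-y,y^*\rangle=\langle y-x,x^*\rangle=0$; the pseudomonotone polar is $T^\rho=\{(x,x^* ): (x,x^* )\sim_p(y,y^* )\ \forall (y,y^* )\in T\}$. $T$ is pseudomonotone if for all $(x,x^* ),(y,y^* )\in T$, $\langle y-x,x^*\rangle\ge0$ implies $\langle y-x,y^*\rangle\ge0$; $T$ is pre-maximal pseudomonotone if both $T$ and $T^\rho$ are pseudomonotone. *)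

theory Defs
  imports "HOL-Analysis.Analysis"
begin

(* X is a real Banach space ('a::banach); X* is the space of bounded linear functionals;
   the pairing <x,x*> is blinfun_apply x* x; an operator is identified with its graph. *)

type_synonym 'a operator = "('a \<times> ('a \<Rightarrow>\<^sub>L real)) set"

definition shift_op :: "'a::real_normed_vector operator \<Rightarrow> ('a \<Rightarrow>\<^sub>L real) \<Rightarrow> 'a operator" where
  "shift_op T \<alpha> = {(x, x' + \<alpha>) | x x'. (x, x') \<in> T}"

definition monotone_op :: "'a::real_normed_vector operator \<Rightarrow> bool" where
  "monotone_op T \<longleftrightarrow>
     (\<forall>(x, x')\<in>T. \<forall>(y, y')\<in>T. blinfun_apply (x' - y') (x - y) \<ge> 0)"

definition mono_polar :: "'a::real_normed_vector operator \<Rightarrow> 'a operator" where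
  "mono_polar T = {(x, x'). \<forall>(y, y')\<in>T. blinfun_apply (x' - y') (x - y) \<ge> 0}"

definition premax_monotone :: "'a::real_normed_vector operator \<Rightarrow> bool" where
  "premax_monotone T \<longleftrightarrow> monotone_op T \<and> monotone_op (mono_polar T)"

definition sim_p :: "'a::real_normed_vector \<times> ('a \<Rightarrow>\<^sub>L real) \<Rightarrow> 'a \<times> ('a \<Rightarrow>\<^sub>L real) \<Rightarrow> bool" where
  "sim_p p q \<longleftrightarrow> (case p of (x, x') \<Rightarrow> case q of (y, y') \<Rightarrow>
     min (blinfun_apply y' (x - y)) (blinfun_apply x' (y - x)) < 0
     \<or> (blinfun_apply y' (x - y) = 0 \<and> blinfun_apply x' (y - x) = 0))"

definition pseudo_polar :: "'a::real_normed_vector operator \<Rightarrow> 'a operator" where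
  "pseudo_polar T = {p. \<forall>q\<in>T. sim_p p q}"

definition pseudomonotone_op :: "'a::real_normed_vector operator \<Rightarrow> bool" where
  "pseudomonotone_op T \<longleftrightarrow>
     (\<forall>(x, x')\<in>T. \<forall>(y, y')\<in>T.
        blinfun_apply x' (y - x) \<ge> 0 \<longrightarrow> blinfun_apply y' (y - x) \<ge> 0)"

definition premax_pseudomonotone :: "'a::real_normed_vector operator \<Rightarrow> bool" where
  "premax_pseudomonotone T \<longleftrightarrow> pseudomonotone_op T \<and> pseudomonotone_op (pseudo_polar T)"

end

theory Submission
  imports Defs
begin

text \<open>
  If every shift \<open>T + \<alpha>\<close> is pseudomonotone, then \<open>T\<close> is monotone: for \<open>(x, x'), (y, y') \<in> T\<close>
  shift by \<open>-x'\<close>, so that the premise of pseudomonotonicity becomes \<open>0 \<ge> 0\<close> and its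
  conclusion is \<open>\<langle>y - x, y' - x'\<rangle> \<ge> 0\<close>. Moreover \<open>T\<^sup>\<mu> + \<alpha> \<subseteq> (T + \<alpha>)\<^sup>\<rho>\<close>, since the two
  quantities compared in \<open>\<sim>\<^sub>p\<close> add up to \<open>-\<langle>x - z, x' - z'\<rangle> \<le> 0\<close>. Hence all shifts of
  \<open>T\<^sup>\<mu>\<close> are pseudomonotone too, so \<open>T\<^sup>\<mu>\<close> is monotone; and \<open>T \<subseteq> T\<^sup>\<mu>\<close> gives
  \<open>(T\<^sup>\<mu>)\<^sup>\<rho> \<subseteq> T\<^sup>\<rho>\<close>, which is pseudomonotone.
\<close>

lemma shift_op_zero [simp]: "shift_op T 0 = T"
  unfolding shift_op_def by auto

lemma pseudomonotone_op_subset: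
  "pseudomonotone_op B \<Longrightarrow> A \<subseteq> B \<Longrightarrow> pseudomonotone_op A"
  unfolding pseudomonotone_op_def by blast

lemma pseudo_polar_antimono: "A \<subseteq> B \<Longrightarrow> pseudo_polar B \<subseteq> pseudo_polar A"
  unfolding pseudo_polar_def by blast

lemma monotone_op_subset_mono_polar: "monotone_op T \<Longrightarrow> T \<subseteq> mono_polar T"
  unfolding monotone_op_def mono_polar_def by blast

lemma monotone_op_if_shifts_pseudomonotone:
  assumes "\<And>\<alpha>. pseudomonotone_op (shift_op T \<alpha>)"
  shows "monotone_op T"
  unfolding monotone_op_def
proof clarify
  fix x x' y y' assume "(x, x') \<in> T" "(y, y') \<in> T"
  then have "(x, x' + - x') \<in> shift_op T (- x')" "(y, y' + - x') \<in> shift_op T (- x')"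
    unfolding shift_op_def by blast+
  with assms[of "- x'"]
  have "blinfun_apply (x' + - x') (y - x) \<ge> 0 \<longrightarrow> blinfun_apply (y' + - x') (y - x) \<ge> 0"
    unfolding pseudomonotone_op_def by blast
  then have "blinfun_apply (y' - x') (y - x) \<ge> 0" by simp
  moreover have "blinfun_apply (x' - y') (x - y) = blinfun_apply (y' - x') (y - x)"
    by (simp add: blinfun.diff_left blinfun.diff_right algebra_simps)
  ultimately show "blinfun_apply (x' - y') (x - y) \<ge> 0" by simp
qed

lemma shift_mono_polar_subset_pseudo_polar_shift:
  "shift_op (mono_polar T) \<alpha> \<subseteq> pseudo_polar (shift_op T \<alpha>)"
proof
  fix p assume "p \<in> shift_op (mono_polar T) \<alpha>"
  then obtain x x' where p: "p = (x, x' + \<alpha>)" and x_polar: "(x, x') \<in> mono_polar T"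
    unfolding shift_op_def by blast
  show "p \<in> pseudo_polar (shift_op T \<alpha>)"
    unfolding pseudo_polar_def mem_Collect_eq
  proof
    fix q assume "q \<in> shift_op T \<alpha>"
    then obtain z z' where q: "q = (z, z' + \<alpha>)" and "(z, z') \<in> T"
      unfolding shift_op_def by blast
    with x_polar have mono: "blinfun_apply (x' - z') (x - z) \<ge> 0"
      unfolding mono_polar_def by blast
    define a where "a = blinfun_apply (z' + \<alpha>) (x - z)"
    define b where "b = blinfun_apply (x' + \<alpha>) (z - x)"
    have "a + b = - blinfun_apply (x' - z') (x - z)"
      unfolding a_def b_def
      by (simp add: blinfun.diff_left blinfun.diff_right blinfun.add_left algebra_simps)
    with mono have "min a b < 0 \<or> (a = 0 \<and> b = 0)"
      by (auto simp: min_def)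
    then show "sim_p p q"
      unfolding sim_p_def p q a_def b_def by simp
  qed
qed

theorem mainTheorem12:
  fixes T :: "('a::banach \<times> ('a \<Rightarrow>\<^sub>L real)) set"
  assumes "\<forall>\<alpha>. premax_pseudomonotone (shift_op T \<alpha>)"
  shows "premax_monotone T \<and> premax_pseudomonotone (mono_polar T)"
proof -
  have shift: "\<And>\<alpha>. pseudomonotone_op (shift_op T \<alpha>)"
    and shift_polar: "\<And>\<alpha>. pseudomonotone_op (pseudo_polar (shift_op T \<alpha>))"
    using assms unfolding premax_pseudomonotone_def by auto
  have T_mono: "monotone_op T"
    using shift by (rule monotone_op_if_shifts_pseudomonotone)
  have polar_shift: "\<And>\<alpha>. pseudomonotone_op (shift_op (mono_polar T) \<alpha>)"
    using pseudomonotone_op_subset[OF shift_polar shift_mono_polar_subset_pseudo_polar_shift] .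
  have "monotone_op (mono_polar T)"
    using polar_shift by (rule monotone_op_if_shifts_pseudomonotone)
  moreover have "pseudomonotone_op (mono_polar T)"
    using polar_shift[of 0] by simp
  moreover have "pseudomonotone_op (pseudo_polar (mono_polar T))"
    using pseudomonotone_op_subset[OF shift_polar[of 0]]
      pseudo_polar_antimono[OF monotone_op_subset_mono_polar[OF T_mono]]
    by simp
  ultimately show ?thesis
    using T_mono unfolding premax_monotone_def premax_pseudomonotone_def by blast
qed

end
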